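(* Let $A$ be a totally ordered alphabet, $u\in A^*$, and $b,\ell\in A$ with $b>\ell$. Suppose that $\rho_\ell(u)$ is positive (i.e. lies in $A^*$), and that $u$ has a factor $\pi b$, where $\pi$ is a nonempty palindrome. Then $\rho_\ell(\pi)\ell^{-1}$ is a positive palindrome.
   Context: $F(A)$ is the free group on $A$, and elements of $F(A)$ lying in $A^*$ are called positive. The reversal $g\mapsto\tilde g$ is the unique anti-automorphism of $F(A)$ fixing each letter; a palindrome is an element fixed by it. For $\ell\in A$, $\rho_\ell$ is the automorphism of $F(A)$ defined on letters $a\in A$ by $\rho_\ell(a)=a\ell$ if $a<\ell$, $\rho_\ell(\ell)=\ell$, and $\rho_\ell(a)=\ell^{-1}a$ if $a>\ell$. *)

theory Defs
  imports Main
begin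

text \<open>Elements of the free group F(A) are represented by freely reduced words
  over A and its formal inverses: (True, a) is the letter a, (False, a) is a^-1.\<close>

type_synonym 'a fgword = "(bool \<times> 'a) list"

fun cons_red :: "bool \<times> 'a \<Rightarrow> 'a fgword \<Rightarrow> 'a fgword" where
  "cons_red x [] = [x]"
| "cons_red x (y # ys) = (if fst x \<noteq> fst y \<and> snd x = snd y then ys else x # y # ys)"

definition fg_reduce :: "'a fgword \<Rightarrow> 'a fgword" where
  "fg_reduce w = foldr cons_red w []"

definition fg_reduced :: "'a fgword \<Rightarrow> bool" where
  "fg_reduced w \<longleftrightarrow> fg_reduce w = w"

definition fg_mult :: "'a fgword \<Rightarrow> 'a fgword \<Rightarrow> 'a fgword" where
  "fg_mult v w = fg_reduce (v @ w)"

definition fg_inv :: "'a fgword \<Rightarrow> 'a fgword" where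
  "fg_inv w = rev (map (\<lambda>(s, a). (\<not> s, a)) w)"

definition fg_of_word :: "'a list \<Rightarrow> 'a fgword" where
  "fg_of_word u = map (\<lambda>a. (True, a)) u"

definition fg_positive :: "'a fgword \<Rightarrow> bool" where
  "fg_positive w \<longleftrightarrow> (\<forall>x \<in> set w. fst x)"

text \<open>Reversal anti-automorphism fixing each letter (on reduced words it is
  plain list reversal, keeping exponents), and palindromes.\<close>
definition fg_rev :: "'a fgword \<Rightarrow> 'a fgword" where
  "fg_rev w = fg_reduce (rev w)"

definition fg_palindrome :: "'a fgword \<Rightarrow> bool" where
  "fg_palindrome w \<longleftrightarrow> fg_rev w = w"

definition rho_letter :: "'a::linorder \<Rightarrow> 'a \<Rightarrow> 'a fgword" where
  "rho_letter l a = (if a < l then [(True, a), (True, l)]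
                     else if a = l then [(True, l)]
                     else [(False, l), (True, a)])"

fun rho_gen :: "'a::linorder \<Rightarrow> bool \<times> 'a \<Rightarrow> 'a fgword" where
  "rho_gen l (True, a) = rho_letter l a"
| "rho_gen l (False, a) = fg_inv (rho_letter l a)"

definition rho :: "'a::linorder \<Rightarrow> 'a fgword \<Rightarrow> 'a fgword" where
  "rho l w = fg_reduce (concat (map (rho_gen l) w))"

end

theory Submission
  imports Defs
begin

text \<open>In \<open>\<rho>\<^sub>\<ell>(w)\<close> for a positive word \<open>w\<close> the only cancellations are between the
  trailing \<open>\<ell>\<close> of \<open>\<rho>\<^sub>\<ell>(a)\<close>, \<open>a \<le> \<ell>\<close>, and the leading \<open>\<ell>\<^sup>-\<^sup>1\<close> of \<open>\<rho>\<^sub>\<ell>(c)\<close> for the next letter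
  \<open>c > \<ell>\<close>, so the reduced word is explicit. If \<open>\<rho>\<^sub>\<ell>(u)\<close> is positive, the \<open>\<ell>\<^sup>-\<^sup>1\<close> opening
  \<open>\<rho>\<^sub>\<ell>(b)\<close> must cancel, so the palindrome \<open>\<pi>\<close> ends, hence also begins, with a letter
  \<open>\<le> \<ell>\<close>. Then \<open>\<rho>\<^sub>\<ell>(\<pi>) = w\<ell>\<close> where the positive word \<open>w\<close> arises from \<open>\<pi>\<close> by deleting
  every \<open>\<ell>\<close> and inserting \<open>\<ell>\<close> between any two adjacent letters \<open>\<le> \<ell>\<close>; this rule
  commutes with reversal, so \<open>w\<close> is a palindrome.\<close>

text \<open>The reduced form of \<open>\<rho>\<^sub>\<ell>(u)\<close> for a factor \<open>u\<close> of a positive word: \<open>lc\<close> says that the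
  letter left of \<open>u\<close> is \<open>\<le> \<ell>\<close>, \<open>rc\<close> that the letter right of \<open>u\<close> is \<open>> \<ell>\<close>, i.e. that
  the neighbour cancels a leading \<open>\<ell>\<^sup>-\<^sup>1\<close>, resp. a trailing \<open>\<ell>\<close>.\<close>

fun rho_factor :: "'a::linorder \<Rightarrow> bool \<Rightarrow> bool \<Rightarrow> 'a list \<Rightarrow> 'a fgword" where
  "rho_factor l lc rc [] = []"
| "rho_factor l lc rc (a # u) =
     (if l < a \<and> \<not> lc then [(False, l)] else []) @
     (if a \<noteq> l then [(True, a)] else []) @
     (if a \<le> l \<and> \<not> (if u = [] then rc else l < hd u) then [(True, l)] else []) @
     rho_factor l (a \<le> l) rc u"

lemma rho_factor_append:
  "rho_factor l lc rc (xs @ ys) =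
     rho_factor l lc (if ys = [] then rc else l < hd ys) xs @
     rho_factor l (if xs = [] then lc else last xs \<le> l) rc ys"
  by (induction xs arbitrary: lc) auto

lemma rho_factor_left_True_hd: "rho_factor l True rc u = [] \<or> fst (hd (rho_factor l True rc u))"
  by (induction u) auto

lemma rho_factor_left_False:
  "rho_factor l False rc u =
     (if u \<noteq> [] \<and> l < hd u then [(False, l)] else []) @ rho_factor l True rc u"
  by (cases u) auto

lemma rho_factor_hd_le: "u \<noteq> [] \<Longrightarrow> hd u \<le> l \<Longrightarrow> rho_factor l lc rc u = rho_factor l lc' rc u"
  by (cases u) auto

lemma rho_factor_last_le:
  "u \<noteq> [] \<Longrightarrow> last u \<le> l \<Longrightarrow> rho_factor l lc False u = rho_factor l lc True u @ [(True, l)]"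
  by (induction u arbitrary: lc) auto

lemma fg_reduce_append: "fg_reduce (xs @ ys) = foldr cons_red xs (fg_reduce ys)"
  by (simp add: fg_reduce_def)

lemma cons_red_positive: "w = [] \<or> fst (hd w) \<Longrightarrow> cons_red (True, a) w = (True, a) # w"
  by (cases w) auto

lemma rho_fg_of_word: "rho l (fg_of_word u) = rho_factor l False False u"
proof -
  have "fg_reduce (concat (map (rho_letter l) u)) = rho_factor l False False u"
  proof (induction u)
    case Nil
    then show ?case by (simp add: fg_reduce_def)
  next
    case (Cons a u)
    have "foldr cons_red (rho_letter l a) (rho_factor l False False u) =
          rho_factor l False False (a # u)"
      using rho_factor_left_True_hd[of l False u]
      by (cases u) (auto simp: rho_letter_def rho_factor_left_False cons_red_positive)
    with Cons.IH show ?case by (simp add: fg_reduce_append)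
  qed
  then show ?thesis by (simp add: rho_def fg_of_word_def comp_def)
qed

lemma fg_positive_Nil [simp]: "fg_positive []"
  by (simp add: fg_positive_def)

lemma fg_positive_Cons [simp]: "fg_positive (x # w) \<longleftrightarrow> fst x \<and> fg_positive w"
  by (simp add: fg_positive_def)

lemma fg_positive_append [simp]: "fg_positive (xs @ ys) \<longleftrightarrow> fg_positive xs \<and> fg_positive ys"
  by (auto simp: fg_positive_def)

lemma fg_reduce_positive: "fg_positive w \<Longrightarrow> fg_reduce w = w"
proof (induction w)
  case Nil
  then show ?case by (simp add: fg_reduce_def)
next
  case (Cons x w)
  then show ?case
    by (cases w) (auto simp: fg_reduce_def)
qed

fun rho_core :: "'a::linorder \<Rightarrow> 'a list \<Rightarrow> 'a fgword" where
  "rho_core l [] = []"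
| "rho_core l [a] = (if a \<noteq> l then [(True, a)] else [])"
| "rho_core l (a # c # u) =
     (if a \<noteq> l then [(True, a)] else []) @
     (if a \<le> l \<and> c \<le> l then [(True, l)] else []) @ rho_core l (c # u)"

lemma rho_core_snoc:
  "rho_core l (u @ [a]) = rho_core l u @
     (if u \<noteq> [] \<and> last u \<le> l \<and> a \<le> l then [(True, l)] else []) @
     (if a \<noteq> l then [(True, a)] else [])"
  by (induction l u rule: rho_core.induct) auto

lemma rev_rho_core: "rev (rho_core l u) = rho_core l (rev u)"
proof (induction l u rule: rho_core.induct)
  case (3 l a c u)
  then show ?case
    using rho_core_snoc[of l "rev u @ [c]" a] by simp
qed auto

lemma rho_factor_positive_eq_rho_core:
  "fg_positive (rho_factor l lc True u) \<Longrightarrow> rho_factor l lc True u = rho_core l u"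
proof (induction l u arbitrary: lc rule: rho_core.induct)
  case (3 l a c u)
  note unfold = rho_factor.simps(2)[of l lc True a "c # u"]
  have "\<not> (l < a \<and> \<not> lc)"
    using "3.prems" unfolding unfold by (auto split: if_split_asm)
  moreover have "fg_positive (rho_factor l (a \<le> l) True (c # u))"
    using "3.prems" unfolding unfold by simp
  then have "rho_factor l (a \<le> l) True (c # u) = rho_core l (c # u)"
    by (rule "3.IH")
  ultimately show ?case
    unfolding unfold by (simp add: not_less)
qed (auto split: if_split_asm)

lemma fg_palindrome_positive_iff: "fg_positive w \<Longrightarrow> fg_palindrome w \<longleftrightarrow> rev w = w"
  by (simp add: fg_palindrome_def fg_rev_def fg_reduce_positive fg_positive_def)

lemma rho_factor_before_greater:
  assumes pos: "fg_positive (rho l (fg_of_word (p @ v @ b # s)))"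
    and "l < b" and "v \<noteq> []"
  shows "last v \<le> l" and "\<exists>lc. fg_positive (rho_factor l lc True v)"
proof -
  define lc where "lc = (if p = [] then False else last p \<le> l)"
  have "rho l (fg_of_word (p @ v @ b # s)) =
        rho_factor l False (l < hd v) p @ rho_factor l lc True v @
        rho_factor l (last v \<le> l) False (b # s)"
    using \<open>l < b\<close> \<open>v \<noteq> []\<close> by (simp add: rho_fg_of_word rho_factor_append lc_def)
  then have "fg_positive (rho_factor l lc True v)"
    and "fg_positive (rho_factor l (last v \<le> l) False (b # s))"
    using pos by simp_all
  then show "last v \<le> l" and "\<exists>lc. fg_positive (rho_factor l lc True v)"
    using \<open>l < b\<close> by (auto split: if_split_asm)
qed

lemma rho_mult_inv_eq_rho_core:
  assumes pos: "fg_positive (rho_factor l lc True v)"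
    and "v \<noteq> []" and "hd v \<le> l" and "last v \<le> l"
  shows "fg_mult (rho l (fg_of_word v)) (fg_inv [(True, l)]) = rho_core l v"
proof -
  have core: "rho_factor l lc True v = rho_core l v"
    using pos by (rule rho_factor_positive_eq_rho_core)
  then have "rho l (fg_of_word v) = rho_core l v @ [(True, l)]"
    using assms(2-4) rho_factor_hd_le[of v l False True lc]
    by (simp add: rho_fg_of_word rho_factor_last_le)
  then have "fg_mult (rho l (fg_of_word v)) (fg_inv [(True, l)]) = fg_reduce (rho_core l v)"
    by (simp add: fg_mult_def fg_inv_def fg_reduce_append fg_reduce_def)
  also have "\<dots> = rho_core l v"
    using pos core by (simp add: fg_reduce_positive)
  finally show ?thesis .
qed

theorem lemma4p2:
  fixes u p \<pi> s :: "'a::linorder list" and b l :: 'a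
  assumes "l < b"
    and "fg_positive (rho l (fg_of_word u))"
    and "u = p @ \<pi> @ [b] @ s"
    and "\<pi> \<noteq> []"
    and "rev \<pi> = \<pi>"
  shows "fg_positive (fg_mult (rho l (fg_of_word \<pi>)) (fg_inv [(True, l)])) \<and>
         fg_palindrome (fg_mult (rho l (fg_of_word \<pi>)) (fg_inv [(True, l)]))"
proof -
  have "fg_positive (rho l (fg_of_word (p @ \<pi> @ b # s)))"
    using assms(2,3) by simp
  then obtain lc where last: "last \<pi> \<le> l" and pos: "fg_positive (rho_factor l lc True \<pi>)"
    using rho_factor_before_greater assms(1,4) by blast
  have hd: "hd \<pi> \<le> l"
    using last assms(4,5) by (metis hd_rev)
  have core_pos: "fg_positive (rho_core l \<pi>)"
    using pos rho_factor_positive_eq_rho_core by metis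
  have "rev (rho_core l \<pi>) = rho_core l \<pi>"
    using assms(5) by (simp add: rev_rho_core)
  then show ?thesis
    using core_pos rho_mult_inv_eq_rho_core[OF pos assms(4) hd last]
    by (simp add: fg_palindrome_positive_iff)
qed

end
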